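(* Let $U\subset E$ be the open subset defined by $\theta_1\neq0,\dots,\theta_c\neq0$, $x_1\neq0,\dots,x_r\neq0$, and let $\phi:U\to V_{\mathrm{GHV}}$ be the isomorphism onto the GHV locus described in the context. Then the function $\phi^*W$ on $U$, where $W=x_1+\dots+x_r$, extends holomorphically across the loci in $E$ where $\theta_1,\dots,\theta_c$ vanish; that is, $\phi^*W$ extends to a holomorphic function on the open subset $\{[x]\in E: x_1\cdots x_r\neq0\}$ of $E$.
   Context: Let $Y$ be a Fano toric orbifold with fan in a lattice $N$, with rays $\rho_1,\dots,\rho_r\in N$; exact sequences $0\to\mathbb{L}\to\mathbb{Z}^r\xrightarrow{\rho}N\to0$ ($\rho(e_i)=\rho_i$) and $0\to M\to(\mathbb{Z}^r)^\vee\xrightarrow{D}\mathbb{L}^\vee\to0$, $\mathbb{L}^\vee\cong\mathrm{Pic}(Y)$, $D_i=D(e_i^\vee)$. Let $L_1,\dots,L_c$ be line bundles on $Y$, with pairwise disjoint $S_1,\dots,S_c\subset\{1,\dots,r\}$ such that $L_i=\sum_{j\in S_i}D_j$, and $S_0=\{1,\dots,r\}\setminus(S_1\cup\dots\cup S_c)$. Coordinates $x_1,\dots,x_r$ on $\mathbb{C}^r=(\mathbb{Z}^r)^\vee\otimes\mathbb{C}$. The GHV locus $V_{\mathrm{GHV}}$ is the subvariety of $(\mathbb{C}^\times)^r$ defined by $\sum_{j\in S_i}y_j=1$ for $i=1,\dots,c$ (coordinates $y_1,\dots,y_r$), and $W=y_1+\dots+y_r$ on it. A tower of bundles is a linear map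 $\zeta:N\to(\mathbb{Z}^c)^\vee$ such that, with $\zeta_k=\zeta(\rho_k)$, for $k\in S_i$: $\zeta_k(e_j)=w_{jk}$ if $j<i$ or $i=0$, $=1$ if $j=i$, $=0$ if $j>i$, with integers $w_{jk}\le0$. Fix one. $(\mathbb{C}^\times)^c$ acts on $\mathbb{C}^r$ by $(g\cdot x)_k=\big(\prod_j g_j^{\zeta_k(e_j)}\big)x_k$, and $E=\mathbb{C}^r/\!\!/(\mathbb{C}^\times)^c$ is the GIT quotient with stability condition $(1,\dots,1)$. Define $\theta_k(x)=\sum_{j\in S_k}\big(\prod_{m=1}^{k-1}\theta_m(x)^{-w_{mj}}\big)x_j$ recursively for $k=1,\dots,c$. The isomorphism $\phi:U\to V_{\mathrm{GHV}}$ sends the class of $x$ to $y$ where, for $j\in S_k$, $y_j=x_j\theta_k^{-1}\prod_{m=1}^{k-1}\theta_m^{-w_{mj}}$ if $k\neq0$ and $y_j=x_j\prod_{m=1}^{c}\theta_m^{-w_{mj}}$ if $k=0$ (these expressions are invariant under the $(\mathbb{C}^\times)^c$-action). *)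

theory Defs
  imports "HOL-Analysis.Analysis"
begin

text \<open>Ray indices form a finite type 'r (so r = CARD('r)); the lattice
N is \<int>^'n, and a ray \<rho> k is a function 'n \<Rightarrow> int.  The bundle indices are the
naturals 1..c; the map S :: 'r \<Rightarrow> nat sends a ray index k to the unique i \<in> {0..c}
with k \<in> S_i (so the S_i are pairwise disjoint and S_0 is the complement).
The integers w_{jk} are given by w j k (j a bundle index, k a ray index).\<close>

definition ray_cone :: "('r \<Rightarrow> 'n \<Rightarrow> int) \<Rightarrow> 'r set \<Rightarrow> ('n \<Rightarrow> real) set" where
  "ray_cone \<rho> \<sigma> = {v. \<exists>a. (\<forall>k\<in>\<sigma>. a k \<ge> 0) \<and> v = (\<lambda>i. \<Sum>k\<in>\<sigma>. a k * real_of_int (\<rho> k i))}"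

definition rays_lin_indep :: "('r \<Rightarrow> 'n \<Rightarrow> int) \<Rightarrow> 'r set \<Rightarrow> bool" where
  "rays_lin_indep \<rho> \<sigma> \<longleftrightarrow>
     (\<forall>a. (\<lambda>i. \<Sum>k\<in>\<sigma>. a k * real_of_int (\<rho> k i)) = (\<lambda>i. 0) \<longrightarrow> (\<forall>k\<in>\<sigma>. a k = (0::real)))"

definition complete_simplicial_fan :: "('r::finite \<Rightarrow> 'n::finite \<Rightarrow> int) \<Rightarrow> 'r set set \<Rightarrow> bool" where
  "complete_simplicial_fan \<rho> \<Sigma> \<longleftrightarrow>
     (\<forall>\<sigma>\<in>\<Sigma>. rays_lin_indep \<rho> \<sigma>) \<and>
     (\<forall>\<sigma>\<in>\<Sigma>. \<forall>\<tau>. \<tau> \<subseteq> \<sigma> \<longrightarrow> \<tau> \<in> \<Sigma>) \<and>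
     (\<forall>\<sigma>\<in>\<Sigma>. \<forall>\<tau>\<in>\<Sigma>. ray_cone \<rho> \<sigma> \<inter> ray_cone \<rho> \<tau> = ray_cone \<rho> (\<sigma> \<inter> \<tau>)) \<and>
     (\<forall>k. {k} \<in> \<Sigma>) \<and>
     (\<Union>\<sigma>\<in>\<Sigma>. ray_cone \<rho> \<sigma>) = UNIV"

definition maximal_cone :: "'r set set \<Rightarrow> 'r set \<Rightarrow> bool" where
  "maximal_cone \<Sigma> \<sigma> \<longleftrightarrow> \<sigma> \<in> \<Sigma> \<and> (\<forall>\<tau>\<in>\<Sigma>. \<sigma> \<subseteq> \<tau> \<longrightarrow> \<tau> = \<sigma>)"

text \<open>Fano: the anticanonical divisor (support function equal to 1 on every ray) is ample,
i.e. strictly convex: for every maximal cone there is a linear form equal to 1 on its rays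
and < 1 on all other rays.\<close>
definition fano_toric_orbifold :: "('r::finite \<Rightarrow> 'n::finite \<Rightarrow> int) \<Rightarrow> 'r set set \<Rightarrow> bool" where
  "fano_toric_orbifold \<rho> \<Sigma> \<longleftrightarrow>
     complete_simplicial_fan \<rho> \<Sigma> \<and>
     (\<forall>v::'n \<Rightarrow> int. \<exists>a::'r \<Rightarrow> int. v = (\<lambda>i. \<Sum>k\<in>UNIV. a k * \<rho> k i)) \<and>
     (\<forall>\<sigma>. maximal_cone \<Sigma> \<sigma> \<longrightarrow>
        (\<exists>m::'n \<Rightarrow> real.
           (\<forall>k\<in>\<sigma>. (\<Sum>i\<in>UNIV. m i * real_of_int (\<rho> k i)) = 1) \<and>
           (\<forall>k. k \<notin> \<sigma> \<longrightarrow> (\<Sum>i\<in>UNIV. m i * real_of_int (\<rho> k i)) < 1)))"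

text \<open>zeta w S k j = \<zeta>_k(e_j), for ray index k and bundle index j \<in> {1..c}.\<close>
definition zeta :: "(nat \<Rightarrow> 'r \<Rightarrow> int) \<Rightarrow> ('r \<Rightarrow> nat) \<Rightarrow> 'r \<Rightarrow> nat \<Rightarrow> int" where
  "zeta w S k j = (if S k = 0 \<or> j < S k then w j k else if j = S k then 1 else 0)"

text \<open>Tower of bundles: \<zeta> is a linear map N \<rightarrow> (\<int>^c)^\<or> (given by an integer matrix Z)
with the prescribed values on the rays and w_{jk} \<le> 0.\<close>
definition tower_of_bundles ::
  "nat \<Rightarrow> ('r::finite \<Rightarrow> 'n::finite \<Rightarrow> int) \<Rightarrow> ('r \<Rightarrow> nat) \<Rightarrow> (nat \<Rightarrow> 'r \<Rightarrow> int) \<Rightarrow> bool" where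
  "tower_of_bundles c \<rho> S w \<longleftrightarrow>
     (\<exists>Z :: nat \<Rightarrow> 'n \<Rightarrow> int. \<forall>k. \<forall>j\<in>{1..c}. zeta w S k j = (\<Sum>i\<in>UNIV. Z j i * \<rho> k i)) \<and>
     (\<forall>k. \<forall>j\<in>{1..c}. (S k = 0 \<or> j < S k) \<longrightarrow> w j k \<le> 0)"

definition torus_act :: "(nat \<Rightarrow> 'r \<Rightarrow> int) \<Rightarrow> ('r \<Rightarrow> nat) \<Rightarrow> nat \<Rightarrow> (nat \<Rightarrow> complex) \<Rightarrow> complex^'r \<Rightarrow> complex^'r" where
  "torus_act w S c g x = (\<chi> k. (\<Prod>j\<in>{1..c}. g j powi zeta w S k j) * x$k)"

text \<open>GIT semistability for the diagonal torus action with character (1,...,1):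
some monomial semi-invariant of weight m(1,...,1), m > 0, does not vanish at x.\<close>
definition semistable :: "(nat \<Rightarrow> 'r::finite \<Rightarrow> int) \<Rightarrow> ('r \<Rightarrow> nat) \<Rightarrow> nat \<Rightarrow> complex^'r \<Rightarrow> bool" where
  "semistable w S c x \<longleftrightarrow>
     (\<exists>(a::'r \<Rightarrow> nat) (m::nat). m > 0 \<and> (\<forall>k. a k > 0 \<longrightarrow> x$k \<noteq> 0) \<and>
        (\<forall>j\<in>{1..c}. (\<Sum>k\<in>UNIV. int (a k) * zeta w S k j) = int m))"

text \<open>The recursively defined \<theta>_k(x), k = 1..c (theta ... 0 is an unused dummy).\<close>
fun theta :: "(nat \<Rightarrow> 'r::finite \<Rightarrow> int) \<Rightarrow> ('r \<Rightarrow> nat) \<Rightarrow> complex^'r \<Rightarrow> nat \<Rightarrow> complex" where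
  "theta w S x 0 = 0"
| "theta w S x (Suc k) =
     (\<Sum>j\<in>{j. S j = Suc k}. (\<Prod>m\<in>{1..k}. theta w S x m ^ nat (- w m j)) * x$j)"

definition phi :: "(nat \<Rightarrow> 'r::finite \<Rightarrow> int) \<Rightarrow> ('r \<Rightarrow> nat) \<Rightarrow> nat \<Rightarrow> complex^'r \<Rightarrow> complex^'r" where
  "phi w S c x = (\<chi> j. if S j \<noteq> 0
      then x$j * inverse (theta w S x (S j)) * (\<Prod>m\<in>{1..<S j}. theta w S x m ^ nat (- w m j))
      else x$j * (\<Prod>m\<in>{1..c}. theta w S x m ^ nat (- w m j)))"

definition W_GHV :: "complex^'r::finite \<Rightarrow> complex" where
  "W_GHV y = (\<Sum>j\<in>UNIV. y$j)"

definition holomorphic_several :: "(complex^'r::finite \<Rightarrow> complex) \<Rightarrow> (complex^'r) set \<Rightarrow> bool" where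
  "holomorphic_several F A \<longleftrightarrow>
     (\<forall>x\<in>A. \<exists>D. (F has_derivative D) (at x) \<and> (\<forall>(a::complex) v. D (a *s v) = a * D v))"

end

theory Submission
  imports Defs
begin

text \<open>On the locus where all \<theta>_i are invertible, the coordinates of \<phi> indexed by
each block S_i (i \<ge> 1) sum to \<theta>_i / \<theta>_i = 1, since the defining sum of \<theta>_i appears
in the numerator. Hence the pullback of W is c + \<Sigma>_{j \<in> S_0} x_j \<Prod>_m \<theta>_m^{-w_mj},
which is a polynomial in x because all w_mj \<le> 0, so it is entire. The \<theta>_k are
semi-invariants of weight e_k under the torus, and x_j with j \<in> S_0 has weight
(w_1j, ..., w_cj), so every summand is invariant.\<close>

lemma holomorphic_several_const: "holomorphic_several (\<lambda>x. a) A"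
  unfolding holomorphic_several_def by (intro ballI exI[of _ "\<lambda>_. 0"]) auto

lemma holomorphic_several_component: "holomorphic_several (\<lambda>x. x$k) A"
  unfolding holomorphic_several_def
  by (intro ballI exI[of _ "\<lambda>v. v$k"]) (auto intro: bounded_linear_imp_has_derivative)

lemma holomorphic_several_add:
  assumes "holomorphic_several f A" and "holomorphic_several g A"
  shows "holomorphic_several (\<lambda>x. f x + g x) A"
  unfolding holomorphic_several_def
proof
  fix x assume "x \<in> A"
  then obtain D E where "(f has_derivative D) (at x)" "\<forall>(a::complex) v. D (a *s v) = a * D v"
    and "(g has_derivative E) (at x)" "\<forall>(a::complex) v. E (a *s v) = a * E v"
    using assms unfolding holomorphic_several_def by blast
  then show "\<exists>D. ((\<lambda>x. f x + g x) has_derivative D) (at x) \<and> (\<forall>(a::complex) v. D (a *s v) = a * D v)"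
    by (intro exI[of _ "\<lambda>v. D v + E v"]) (auto intro: has_derivative_add simp: algebra_simps)
qed

lemma holomorphic_several_mult:
  assumes "holomorphic_several f A" and "holomorphic_several g A"
  shows "holomorphic_several (\<lambda>x. f x * g x) A"
  unfolding holomorphic_several_def
proof
  fix x assume "x \<in> A"
  then obtain D E where "(f has_derivative D) (at x)" "\<forall>(a::complex) v. D (a *s v) = a * D v"
    and "(g has_derivative E) (at x)" "\<forall>(a::complex) v. E (a *s v) = a * E v"
    using assms unfolding holomorphic_several_def by blast
  then show "\<exists>D. ((\<lambda>x. f x * g x) has_derivative D) (at x) \<and> (\<forall>(a::complex) v. D (a *s v) = a * D v)"
    by (intro exI[of _ "\<lambda>v. f x * E v + D v * g x"])
      (auto intro: has_derivative_mult[THEN has_derivative_eq_rhs] simp: algebra_simps)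
qed

lemma holomorphic_several_sum:
  "finite I \<Longrightarrow> (\<And>i. i \<in> I \<Longrightarrow> holomorphic_several (f i) A) \<Longrightarrow>
    holomorphic_several (\<lambda>x. \<Sum>i\<in>I. f i x) A"
  by (induction I rule: finite_induct) (auto intro: holomorphic_several_const holomorphic_several_add)

lemma holomorphic_several_prod:
  "finite I \<Longrightarrow> (\<And>i. i \<in> I \<Longrightarrow> holomorphic_several (f i) A) \<Longrightarrow>
    holomorphic_several (\<lambda>x. \<Prod>i\<in>I. f i x) A"
  by (induction I rule: finite_induct) (auto intro: holomorphic_several_const holomorphic_several_mult)

lemma holomorphic_several_power:
  "holomorphic_several f A \<Longrightarrow> holomorphic_several (\<lambda>x. f x ^ n) A"
  by (induction n) (auto intro: holomorphic_several_const holomorphic_several_mult)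

lemma holomorphic_several_theta: "holomorphic_several (\<lambda>x. theta w S x k) A"
proof (induction k rule: less_induct)
  case (less k)
  show ?case
  proof (cases k)
    case 0
    then show ?thesis by (simp add: holomorphic_several_const)
  next
    case (Suc k')
    have "holomorphic_several
        (\<lambda>x. \<Sum>j\<in>{j. S j = Suc k'}. (\<Prod>m\<in>{1..k'}. theta w S x m ^ nat (- w m j)) * x$j) A"
      using less Suc
      by (intro holomorphic_several_sum holomorphic_several_mult holomorphic_several_prod
          holomorphic_several_power holomorphic_several_component) auto
    then show ?thesis using Suc by simp
  qed
qed

lemma prod_mult_power_nat_minus_powi:
  fixes g t :: "'a \<Rightarrow> complex"
  assumes "\<And>m. m \<in> I \<Longrightarrow> g m \<noteq> 0 \<and> v m \<le> 0"
  shows "(\<Prod>m\<in>I. (g m * t m) ^ nat (- v m)) * (\<Prod>m\<in>I. g m powi v m) = (\<Prod>m\<in>I. t m ^ nat (- v m))"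
  unfolding prod.distrib[symmetric]
proof (rule prod.cong[OF refl])
  fix m assume "m \<in> I"
  with assms have "g m \<noteq> 0" "v m \<le> 0" by auto
  then have "g m ^ nat (- v m) * g m powi v m = 1"
    by (simp add: power_int_def power_inverse)
  then show "(g m * t m) ^ nat (- v m) * g m powi v m = t m ^ nat (- v m)"
    by (simp add: power_mult_distrib algebra_simps)
qed

lemma tower_of_bundles_weights_nonpos:
  "tower_of_bundles c \<rho> S w \<Longrightarrow> j \<in> {1..c} \<Longrightarrow> S k = 0 \<or> j < S k \<Longrightarrow> w j k \<le> 0"
  unfolding tower_of_bundles_def by blast

lemma torus_act_nth_base:
  assumes "S j = 0"
  shows "torus_act w S c g x $ j = (\<Prod>i\<in>{1..c}. g i powi w i j) * x$j"
  unfolding torus_act_def by (simp add: zeta_def assms)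

lemma torus_act_nth_block:
  assumes "S j = Suc k" and "Suc k \<le> c"
  shows "torus_act w S c g x $ j = g (Suc k) * (\<Prod>i\<in>{1..k}. g i powi w i j) * x$j"
proof -
  have "{1..c} = {1..Suc k} \<union> {Suc k<..c}" using assms(2) by auto
  then have "(\<Prod>i\<in>{1..c}. g i powi zeta w S j i) =
      (\<Prod>i\<in>{1..Suc k}. g i powi zeta w S j i) * (\<Prod>i\<in>{Suc k<..c}. g i powi zeta w S j i)"
    by (simp add: prod.union_disjoint ivl_disj_int)
  also have "{1..Suc k} = insert (Suc k) {1..k}" by auto
  also have "(\<Prod>i\<in>insert (Suc k) {1..k}. g i powi zeta w S j i) * (\<Prod>i\<in>{Suc k<..c}. g i powi zeta w S j i) =
      g (Suc k) * (\<Prod>i\<in>{1..k}. g i powi w i j)"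
    by (simp add: zeta_def assms(1))
  finally show ?thesis unfolding torus_act_def by simp
qed

lemma theta_torus_act:
  assumes tower: "tower_of_bundles c \<rho> S w"
    and g: "\<forall>j\<in>{1..c}. g j \<noteq> 0"
    and k: "1 \<le> k" "k \<le> c"
  shows "theta w S (torus_act w S c g x) k = g k * theta w S x k"
  using k
proof (induction k rule: less_induct)
  case (less k)
  then obtain k' where k': "k = Suc k'" by (cases k) auto
  have "theta w S (torus_act w S c g x) k =
      (\<Sum>j\<in>{j. S j = k}. (\<Prod>m\<in>{1..k'}. (g m * theta w S x m) ^ nat (- w m j)) *
        (g k * (\<Prod>m\<in>{1..k'}. g m powi w m j) * x$j))"
    using less k' by (simp add: torus_act_nth_block)
  also have "\<dots> = (\<Sum>j\<in>{j. S j = k}. g k * ((\<Prod>m\<in>{1..k'}. theta w S x m ^ nat (- w m j)) * x$j))"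
  proof (rule sum.cong[OF refl])
    fix j assume "j \<in> {j. S j = k}"
    then have "(\<Prod>m\<in>{1..k'}. (g m * theta w S x m) ^ nat (- w m j)) * (\<Prod>m\<in>{1..k'}. g m powi w m j) =
        (\<Prod>m\<in>{1..k'}. theta w S x m ^ nat (- w m j))"
      using less k' g tower_of_bundles_weights_nonpos[OF tower]
      by (intro prod_mult_power_nat_minus_powi) auto
    then show "(\<Prod>m\<in>{1..k'}. (g m * theta w S x m) ^ nat (- w m j)) *
        (g k * (\<Prod>m\<in>{1..k'}. g m powi w m j) * x$j) =
        g k * ((\<Prod>m\<in>{1..k'}. theta w S x m ^ nat (- w m j)) * x$j)"
      by (simp add: algebra_simps)
  qed
  also have "\<dots> = g k * theta w S x k" using k' by (simp add: sum_distrib_left)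
  finally show ?case .
qed

definition W_extension :: "(nat \<Rightarrow> 'r::finite \<Rightarrow> int) \<Rightarrow> ('r \<Rightarrow> nat) \<Rightarrow> nat \<Rightarrow> complex^'r \<Rightarrow> complex"
  where "W_extension w S c x =
    of_nat c + (\<Sum>j\<in>{j. S j = 0}. x$j * (\<Prod>m\<in>{1..c}. theta w S x m ^ nat (- w m j)))"

lemma holomorphic_several_W_extension: "holomorphic_several (W_extension w S c) A"
  unfolding W_extension_def[abs_def]
  by (intro holomorphic_several_add holomorphic_several_const holomorphic_several_sum
      holomorphic_several_mult holomorphic_several_component holomorphic_several_prod
      holomorphic_several_power holomorphic_several_theta) auto

lemma W_extension_torus_act:
  assumes tower: "tower_of_bundles c \<rho> S w"
    and g: "\<forall>j\<in>{1..c}. g j \<noteq> 0"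
  shows "W_extension w S c (torus_act w S c g x) = W_extension w S c x"
proof -
  have "torus_act w S c g x $ j * (\<Prod>m\<in>{1..c}. theta w S (torus_act w S c g x) m ^ nat (- w m j)) =
      x$j * (\<Prod>m\<in>{1..c}. theta w S x m ^ nat (- w m j))" if j: "S j = 0" for j
  proof -
    have "(\<Prod>m\<in>{1..c}. theta w S (torus_act w S c g x) m ^ nat (- w m j)) =
        (\<Prod>m\<in>{1..c}. (g m * theta w S x m) ^ nat (- w m j))"
      using theta_torus_act[OF tower g] by (intro prod.cong) auto
    moreover have "(\<Prod>m\<in>{1..c}. (g m * theta w S x m) ^ nat (- w m j)) * (\<Prod>m\<in>{1..c}. g m powi w m j) =
        (\<Prod>m\<in>{1..c}. theta w S x m ^ nat (- w m j))"
      using g j tower_of_bundles_weights_nonpos[OF tower]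
      by (intro prod_mult_power_nat_minus_powi) auto
    ultimately show ?thesis
      using j by (simp add: torus_act_nth_base algebra_simps)
  qed
  then show ?thesis
    unfolding W_extension_def by (intro arg_cong[where f="\<lambda>t. of_nat c + t"] sum.cong) auto
qed

lemma sum_phi_block:
  assumes "1 \<le> i" and "theta w S x i \<noteq> 0"
  shows "(\<Sum>j\<in>{j. S j = i}. phi w S c x $ j) = 1"
proof -
  obtain i' where i': "i = Suc i'" using assms(1) by (cases i) auto
  have "(\<Sum>j\<in>{j. S j = i}. phi w S c x $ j) =
      (\<Sum>j\<in>{j. S j = i}. inverse (theta w S x i) * ((\<Prod>m\<in>{1..i'}. theta w S x m ^ nat (- w m j)) * x$j))"
  proof (rule sum.cong[OF refl])
    fix j assume "j \<in> {j. S j = i}"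
    moreover have "{1..<i} = {1..i'}" using i' by auto
    ultimately show "phi w S c x $ j =
        inverse (theta w S x i) * ((\<Prod>m\<in>{1..i'}. theta w S x m ^ nat (- w m j)) * x$j)"
      unfolding phi_def using i' by (simp add: algebra_simps)
  qed
  also have "\<dots> = inverse (theta w S x i) * theta w S x i"
    using i' by (simp add: sum_distrib_left)
  finally show ?thesis using assms(2) by simp
qed

lemma W_GHV_phi_eq_W_extension:
  assumes "\<forall>k. S k \<le> c" and "\<forall>i\<in>{1..c}. theta w S x i \<noteq> 0"
  shows "W_GHV (phi w S c x) = W_extension w S c x"
proof -
  have "W_GHV (phi w S c x) = (\<Sum>i\<in>{0..c}. \<Sum>j\<in>{j. j \<in> UNIV \<and> S j = i}. phi w S c x $ j)"
    unfolding W_GHV_def using assms(1) by (intro sum.group[symmetric]) auto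
  also have "{0..c} = insert 0 {1..c}" by auto
  also have "(\<Sum>i\<in>insert 0 {1..c}. \<Sum>j\<in>{j. j \<in> UNIV \<and> S j = i}. phi w S c x $ j) =
      (\<Sum>j\<in>{j. S j = 0}. phi w S c x $ j) + (\<Sum>i\<in>{1..c}. 1)"
    using assms(2) by (simp add: sum_phi_block)
  also have "(\<Sum>j\<in>{j. S j = 0}. phi w S c x $ j) =
      (\<Sum>j\<in>{j. S j = 0}. x$j * (\<Prod>m\<in>{1..c}. theta w S x m ^ nat (- w m j)))"
    by (rule sum.cong) (auto simp: phi_def)
  finally show ?thesis unfolding W_extension_def by simp
qed

theorem proposition3p3:
  fixes \<rho> :: "'r::finite \<Rightarrow> 'n::finite \<Rightarrow> int"
    and \<Sigma> :: "'r set set"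
    and c :: nat
    and S :: "'r \<Rightarrow> nat"
    and w :: "nat \<Rightarrow> 'r \<Rightarrow> int"
  assumes fano: "fano_toric_orbifold \<rho> \<Sigma>"
    and S_range: "\<forall>k. S k \<le> c"
    and tower: "tower_of_bundles c \<rho> S w"
  shows "\<exists>F :: complex^'r \<Rightarrow> complex.
     holomorphic_several F {x. semistable w S c x \<and> (\<forall>k. x$k \<noteq> 0)} \<and>
     (\<forall>x g. semistable w S c x \<and> (\<forall>k. x$k \<noteq> 0) \<and> (\<forall>j\<in>{1..c}. g j \<noteq> 0)
        \<longrightarrow> F (torus_act w S c g x) = F x) \<and>
     (\<forall>x. semistable w S c x \<and> (\<forall>k. x$k \<noteq> 0) \<and> (\<forall>i\<in>{1..c}. theta w S x i \<noteq> 0)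
        \<longrightarrow> F x = W_GHV (phi w S c x))"
  using holomorphic_several_W_extension W_extension_torus_act[OF tower]
    W_GHV_phi_eq_W_extension[OF S_range]
  by (intro exI[of _ "W_extension w S c"]) auto

end
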